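(* Suppose $(J,F,Y)$ is a splitting pullback triple with $J:\mathcal X\to\mathcal H$, $F:\mathcal X\to\mathcal E$. Then $J$ and $F$ are partial isometries and $$\mathcal N(F)=\mathcal R(J^* ),\quad \mathcal R(J)=\mathcal H,\qquad \mathcal N(J)=\mathcal R(F^* ),\quad \mathcal R(F)=\mathcal E.$$
   Context: For Hilbert spaces $\mathcal H,\mathcal X,\mathcal E$, a pullback triple $(J,F,Y)$ consists of $J:\mathcal X\to\mathcal H$, $F:\mathcal X\to\mathcal E$ bounded with dense range, $Y:\mathcal H\to\mathcal X$ a completion operator (densely defined injective linear map with dense range), with $\|u\|_{\mathcal X}^2=\|Ju\|^2+\|Fu\|_{\mathcal E}^2$ for all $u\in\mathcal X$ and $JYf=f$ for $f\in\mathcal D(Y)$. The triple is splitting if $F$ is a partial isometry (equivalently $\mathcal X=\mathcal N(J)\oplus\mathcal N(F)$, or $JF^*=0$, or $J\mathcal N(F)$ dense in $\mathcal H$). $\mathcal N,\mathcal R$ denote null space and range. *)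

theory Defs
  imports "HOL-Analysis.Analysis"
begin

text \<open>Hilbert spaces are modelled as (real) complete inner product spaces,
  i.e. types of class real_inner and complete_space.  Adjoints are the library's adjoint.\<close>

definition null_space :: "('a \<Rightarrow> 'b::zero) \<Rightarrow> 'a set" where
  "null_space T = {x. T x = 0}"

definition partial_isometry :: "('a::real_inner \<Rightarrow> 'b::real_inner) \<Rightarrow> bool" where
  "partial_isometry T \<longleftrightarrow> bounded_linear T \<and>
     (\<forall>x. (\<forall>z\<in>null_space T. x \<bullet> z = 0) \<longrightarrow> norm (T x) = norm x)"

definition completion_operator :: "'h::real_inner set \<Rightarrow> ('h \<Rightarrow> 'x::real_inner) \<Rightarrow> bool" where
  "completion_operator D Y \<longleftrightarrow> subspace D \<and> closure D = UNIV \<and>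
     (\<forall>f\<in>D. \<forall>g\<in>D. Y (f + g) = Y f + Y g) \<and>
     (\<forall>c. \<forall>f\<in>D. Y (c *\<^sub>R f) = c *\<^sub>R Y f) \<and>
     inj_on Y D \<and> closure (Y ` D) = UNIV"

definition pullback_triple ::
  "('x::{real_inner,complete_space} \<Rightarrow> 'h::{real_inner,complete_space})
   \<Rightarrow> ('x \<Rightarrow> 'e::{real_inner,complete_space}) \<Rightarrow> 'h set \<Rightarrow> ('h \<Rightarrow> 'x) \<Rightarrow> bool" where
  "pullback_triple J F D Y \<longleftrightarrow>
     bounded_linear J \<and> bounded_linear F \<and>
     closure (range J) = UNIV \<and> closure (range F) = UNIV \<and>
     completion_operator D Y \<and>
     (\<forall>u. (norm u)\<^sup>2 = (norm (J u))\<^sup>2 + (norm (F u))\<^sup>2) \<and>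
     (\<forall>f\<in>D. J (Y f) = f)"

definition splitting_pullback_triple ::
  "('x::{real_inner,complete_space} \<Rightarrow> 'h::{real_inner,complete_space})
   \<Rightarrow> ('x \<Rightarrow> 'e::{real_inner,complete_space}) \<Rightarrow> 'h set \<Rightarrow> ('h \<Rightarrow> 'x) \<Rightarrow> bool" where
  "splitting_pullback_triple J F D Y \<longleftrightarrow> pullback_triple J F D Y \<and> partial_isometry F"

end

theory Submission
  imports Defs
begin

text \<open>
  Let N be the null space of F. Since F is isometric on the orthogonal complement of N, the norm
  identity forces J to vanish there, while on N itself J is isometric. The projection theorem
  splits the space as N plus its orthogonal complement, so the null space of J is exactly that
  complement and J is a partial isometry; by symmetry the null space of F is the orthogonal
  complement of that of J. A partial isometry maps the complement of its kernel isometrically,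
  hence onto a closed set, so dense range means surjectivity; and then its adjoint is the inverse
  of this restriction, with range the complement of the kernel.
\<close>

lemma parallelogram_law:
  fixes a b :: "'a::real_inner"
  shows "(norm (a + b))\<^sup>2 + (norm (a - b))\<^sup>2 = 2 * (norm a)\<^sup>2 + 2 * (norm b)\<^sup>2"
  by (simp add: power2_norm_eq_inner algebra_simps inner_commute[of b a])

lemma Cauchy_if_dist_sq_le:
  fixes s :: "nat \<Rightarrow> 'a::metric_space"
  assumes le: "\<And>m n. (dist (s m) (s n))\<^sup>2 \<le> g m + g n" and g: "g \<longlonglongrightarrow> 0"
  shows "Cauchy s"
proof (rule metric_CauchyI)
  fix e :: real assume "e > 0"
  then have "eventually (\<lambda>n. g n < e\<^sup>2 / 2) sequentially"
    using g by (intro order_tendstoD(2)) auto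
  then obtain N where N: "\<And>n. n \<ge> N \<Longrightarrow> g n < e\<^sup>2 / 2"
    unfolding eventually_sequentially by blast
  have "dist (s m) (s n) < e" if "m \<ge> N" "n \<ge> N" for m n
  proof -
    have "(dist (s m) (s n))\<^sup>2 < e\<^sup>2"
      using le[of m n] N[OF \<open>m \<ge> N\<close>] N[OF \<open>n \<ge> N\<close>] by linarith
    then show ?thesis
      using \<open>e > 0\<close> by (simp add: power_less_imp_less_base)
  qed
  then show "\<exists>N. \<forall>m\<ge>N. \<forall>n\<ge>N. dist (s m) (s n) < e" by blast
qed

lemma nearest_point_exists_closed_convex:
  fixes S :: "'a::{real_inner,complete_space} set"
  assumes "closed S" "convex S" "S \<noteq> {}"
  obtains p where "p \<in> S" "\<forall>y\<in>S. dist x p \<le> dist x y"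
proof -
  define d where "d = (INF y\<in>S. (dist x y)\<^sup>2)"
  define \<epsilon> where "\<epsilon> n = 1 / (real n + 1)" for n
  have bdd: "bdd_below ((\<lambda>y. (dist x y)\<^sup>2) ` S)"
    by (rule bdd_belowI2[where m = 0]) simp
  have d_le: "d \<le> (dist x y)\<^sup>2" if "y \<in> S" for y
    unfolding d_def using bdd that by (rule cINF_lower)
  have "\<exists>y\<in>S. (dist x y)\<^sup>2 < d + \<epsilon> n" for n
  proof -
    have "d < d + \<epsilon> n"
      by (simp add: \<epsilon>_def)
    then show ?thesis
      using cINF_less_iff[OF \<open>S \<noteq> {}\<close> bdd] unfolding d_def[symmetric] by blast
  qed
  then obtain s where sS: "\<And>n. s n \<in> S" and s: "\<And>n. (dist x (s n))\<^sup>2 < d + \<epsilon> n"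
    by metis
  have \<epsilon>_0: "\<epsilon> \<longlonglongrightarrow> 0"
    unfolding \<epsilon>_def using LIMSEQ_inverse_real_of_nat by (simp add: inverse_eq_divide add.commute)
  \<comment> \<open>Parallelogram law at the midpoint, whose squared distance to x is at least d.\<close>
  have "(dist (s m) (s n))\<^sup>2 \<le> 2 * \<epsilon> m + 2 * \<epsilon> n" for m n
  proof -
    have "midpoint (s m) (s n) \<in> S"
      using sS \<open>convex S\<close> by (simp add: midpoint_def convexD scaleR_add_right)
    moreover have "(x - s m) + (x - s n) = 2 *\<^sub>R (x - midpoint (s m) (s n))"
      by (simp add: midpoint_def algebra_simps scaleR_2)
    ultimately have "4 * d \<le> (norm ((x - s m) + (x - s n)))\<^sup>2"
      using d_le by (simp add: dist_norm power_mult_distrib)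
    moreover have "(dist (s m) (s n))\<^sup>2 = (norm ((x - s m) - (x - s n)))\<^sup>2"
      by (simp add: dist_norm norm_minus_commute)
    ultimately show ?thesis
      using parallelogram_law[of "x - s m" "x - s n"] s[of m] s[of n] by (simp add: dist_norm)
  qed
  then have "Cauchy s"
    by (rule Cauchy_if_dist_sq_le) (use \<epsilon>_0 tendsto_mult_right_zero in blast)
  then obtain p where sp: "s \<longlonglongrightarrow> p"
    using Cauchy_convergent_iff convergent_def by blast
  have "p \<in> S"
    using closed_sequentially[OF \<open>closed S\<close> _ sp] sS by blast
  have "(\<lambda>n. (dist x (s n))\<^sup>2) \<longlonglongrightarrow> (dist x p)\<^sup>2"
    by (intro tendsto_intros sp)
  moreover have "(\<lambda>n. d + \<epsilon> n) \<longlonglongrightarrow> d"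
    using tendsto_add[OF tendsto_const \<epsilon>_0] by simp
  ultimately have "(dist x p)\<^sup>2 \<le> d"
    by (rule LIMSEQ_le) (use s less_imp_le in blast)
  then have "\<forall>y\<in>S. dist x p \<le> dist x y"
    using d_le by (meson order_trans power2_le_imp_le zero_le_dist)
  with \<open>p \<in> S\<close> show thesis ..
qed

lemma orthogonal_decomposition:
  fixes S :: "'a::{real_inner,complete_space} set"
  assumes "subspace S" "closed S"
  obtains a where "a \<in> S" "x - a \<in> S\<^sup>\<bottom>"
proof -
  have "convex S" "S \<noteq> {}"
    using assms subspace_imp_convex subspace_0 by blast+
  then obtain p where "p \<in> S" and p: "\<forall>y\<in>S. dist x p \<le> dist x y"
    using nearest_point_exists_closed_convex \<open>closed S\<close> by blast
  have "y \<bullet> (x - p) = 0" if "y \<in> S" for y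
  proof -
    have "p + y \<in> S" "p - y \<in> S"
      using \<open>p \<in> S\<close> that \<open>subspace S\<close> by (simp_all add: subspace_add subspace_diff)
    then have "(x - p) \<bullet> ((p + y) - p) \<le> 0" "(x - p) \<bullet> ((p - y) - p) \<le> 0"
      using any_closest_point_dot[OF \<open>convex S\<close> \<open>closed S\<close> \<open>p \<in> S\<close> _ p] by blast+
    then show ?thesis
      by (simp add: inner_commute)
  qed
  then have "x - p \<in> S\<^sup>\<bottom>"
    by (simp add: orthogonal_comp_def orthogonal_def)
  with \<open>p \<in> S\<close> show thesis ..
qed

lemma closed_orthogonal_comp: "closed (S\<^sup>\<bottom>)"
proof -
  have "S\<^sup>\<bottom> = (\<Inter>y\<in>S. {x. y \<bullet> x = 0})"
    by (auto simp: orthogonal_comp_def orthogonal_def)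
  then show ?thesis
    by (auto intro!: closed_INT closed_Collect_eq continuous_intros)
qed

lemma orthogonal_comp_orthogonal_comp_closed_subspace:
  fixes S :: "'a::{real_inner,complete_space} set"
  assumes "subspace S" "closed S"
  shows "S\<^sup>\<bottom>\<^sup>\<bottom> = S"
proof
  show "S\<^sup>\<bottom>\<^sup>\<bottom> \<subseteq> S"
  proof
    fix u assume u: "u \<in> S\<^sup>\<bottom>\<^sup>\<bottom>"
    obtain a where "a \<in> S" and ua: "u - a \<in> S\<^sup>\<bottom>"
      using orthogonal_decomposition[OF assms] by blast
    have "a \<in> S\<^sup>\<bottom>\<^sup>\<bottom>"
      using \<open>a \<in> S\<close> orthogonal_comp_subset by blast
    then have "u - a \<in> S\<^sup>\<bottom>\<^sup>\<bottom>"
      using u by (simp add: subspace_diff subspace_orthogonal_comp)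
    then have "u - a = 0"
      using ua orthogonal_Int_0[OF subspace_orthogonal_comp] by blast
    with \<open>a \<in> S\<close> show "u \<in> S" by simp
  qed
qed (rule orthogonal_comp_subset)

lemma subspace_null_space: "linear T \<Longrightarrow> subspace (null_space T)"
  by (auto simp: null_space_def subspace_def linear_add linear_scale linear_0)

lemma closed_null_space: "bounded_linear T \<Longrightarrow> closed (null_space T)"
  unfolding null_space_def
  by (intro closed_Collect_eq linear_continuous_on continuous_on_const)

lemma partial_isometry_iff:
  "partial_isometry T \<longleftrightarrow>
     bounded_linear T \<and> (\<forall>x\<in>(null_space T)\<^sup>\<bottom>. norm (T x) = norm x)"
  by (auto simp: partial_isometry_def orthogonal_comp_def orthogonal_def inner_commute)

lemma inner_eq_if_isometric_on:
  fixes T :: "'a::real_inner \<Rightarrow> 'b::real_inner"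
  assumes "linear T" "subspace S" "\<forall>x\<in>S. norm (T x) = norm x" "x \<in> S" "y \<in> S"
  shows "T x \<bullet> T y = x \<bullet> y"
proof -
  have "x + y \<in> S"
    using assms by (simp add: subspace_add)
  then have "norm (T x + T y) = norm (x + y)"
    using assms(3) linear_add[OF assms(1)] by metis
  then show ?thesis
    using assms(3-5) by (simp add: dot_norm)
qed

lemma closed_image_isometric_on:
  fixes T :: "'a::{real_normed_vector,complete_space} \<Rightarrow> 'b::real_normed_vector"
  assumes "bounded_linear T" "subspace S" "closed S" "\<forall>x\<in>S. norm (T x) = norm x"
  shows "closed (T ` S)"
  unfolding closed_sequential_limits
proof (intro allI impI, elim conjE)
  fix y l assume yS: "\<forall>n. y n \<in> T ` S" and yl: "y \<longlonglongrightarrow> l"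
  then obtain x where xS: "\<And>n. x n \<in> S" and y: "y = (\<lambda>n. T (x n))"
    unfolding image_iff by metis
  have "dist (x m) (x n) = dist (y m) (y n)" for m n
  proof -
    have "x m - x n \<in> S"
      using xS \<open>subspace S\<close> by (simp add: subspace_diff)
    then have "norm (T (x m) - T (x n)) = norm (x m - x n)"
      using assms(4) linear_diff[OF bounded_linear.linear[OF assms(1)]] by metis
    then show ?thesis
      by (simp add: y dist_norm)
  qed
  then have "Cauchy x"
    using LIMSEQ_imp_Cauchy[OF yl] unfolding Cauchy_def by simp
  then obtain p where xp: "x \<longlonglongrightarrow> p"
    using Cauchy_convergent_iff convergent_def by blast
  have "p \<in> S"
    using closed_sequentially[OF \<open>closed S\<close> _ xp] xS by blast
  have "y \<longlonglongrightarrow> T p"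
    unfolding y using bounded_linear.tendsto[OF \<open>bounded_linear T\<close> xp] .
  then have "l = T p"
    using yl LIMSEQ_unique by blast
  with \<open>p \<in> S\<close> show "l \<in> T ` S" by blast
qed

(* The parentheses around the complement matter: T ` S\<^sup>\<bottom> parses as (T ` S)\<^sup>\<bottom>. *)
lemma partial_isometry_image_orthogonal_comp:
  fixes T :: "'a::{real_inner,complete_space} \<Rightarrow> 'b::real_inner"
  assumes "partial_isometry T"
  shows "T ` ((null_space T)\<^sup>\<bottom>) = range T"
proof
  have lin: "linear T"
    using assms by (simp add: partial_isometry_def bounded_linear.linear)
  show "range T \<subseteq> T ` ((null_space T)\<^sup>\<bottom>)"
  proof
    fix y assume "y \<in> range T"
    then obtain x where "y = T x" by blast
    obtain a where a: "a \<in> null_space T" "x - a \<in> (null_space T)\<^sup>\<bottom>"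
      using orthogonal_decomposition subspace_null_space[OF lin] closed_null_space assms
      unfolding partial_isometry_def by metis
    then have "T (x - a) = y"
      using \<open>y = T x\<close> by (simp add: linear_diff[OF lin] null_space_def)
    with a show "y \<in> T ` ((null_space T)\<^sup>\<bottom>)" by blast
  qed
qed blast

lemma surj_if_partial_isometry_dense_range:
  fixes T :: "'a::{real_inner,complete_space} \<Rightarrow> 'b::real_inner"
  assumes "partial_isometry T" "closure (range T) = UNIV"
  shows "range T = UNIV"
proof -
  have "closed (T ` ((null_space T)\<^sup>\<bottom>))"
    using assms(1) unfolding partial_isometry_iff
    by (blast intro: closed_image_isometric_on subspace_orthogonal_comp closed_orthogonal_comp)
  then show ?thesis
    using assms partial_isometry_image_orthogonal_comp closure_closed by metis
qed

lemma range_adjoint_surj_partial_isometry: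
  fixes T :: "'a::{real_inner,complete_space} \<Rightarrow> 'b::real_inner"
  assumes "partial_isometry T" "range T = UNIV"
  shows "range (adjoint T) = (null_space T)\<^sup>\<bottom>"
proof -
  define N where "N = null_space T"
  have lin: "linear T" and iso: "\<forall>x\<in>N\<^sup>\<bottom>. norm (T x) = norm x"
    using assms(1) by (simp_all add: partial_isometry_iff N_def bounded_linear.linear)
  have sub: "subspace (N\<^sup>\<bottom>)"
    by (rule subspace_orthogonal_comp)
  \<comment> \<open>The adjoint is the inverse of the restriction of T to the orthogonal complement of its kernel.\<close>
  define G where "G e = (SOME m. m \<in> N\<^sup>\<bottom> \<and> T m = e)" for e
  have G: "G e \<in> N\<^sup>\<bottom> \<and> T (G e) = e" for e
  proof -
    have "e \<in> T ` (N\<^sup>\<bottom>)"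
      using assms partial_isometry_image_orthogonal_comp unfolding N_def by blast
    then have "\<exists>m. m \<in> N\<^sup>\<bottom> \<and> T m = e"
      by blast
    then show ?thesis
      unfolding G_def by (rule someI_ex)
  qed
  have "adjoint T = G"
  proof (intro adjoint_unique allI)
    fix x e
    obtain a where a: "a \<in> N" "x - a \<in> N\<^sup>\<bottom>"
      using orthogonal_decomposition subspace_null_space[OF lin] closed_null_space assms(1)
      unfolding N_def partial_isometry_def by metis
    have "T x = T (x - a)"
      using a by (simp add: linear_diff[OF lin] N_def null_space_def)
    also have "T (x - a) \<bullet> T (G e) = (x - a) \<bullet> G e"
      using inner_eq_if_isometric_on[OF lin sub iso] a G by blast
    also have "\<dots> = x \<bullet> G e"
      using a G by (simp add: inner_diff_left orthogonal_comp_def orthogonal_def)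
    finally show "T x \<bullet> e = x \<bullet> G e"
      using G by simp
  qed
  moreover have "range G = N\<^sup>\<bottom>"
  proof
    show "N\<^sup>\<bottom> \<subseteq> range G"
    proof
      fix m assume m: "m \<in> N\<^sup>\<bottom>"
      have "m - G (T m) \<in> N\<^sup>\<bottom>"
        using m G sub by (simp add: subspace_diff)
      moreover have "T (m - G (T m)) = 0"
        using G by (simp add: linear_diff[OF lin])
      ultimately have "G (T m) = m"
        using iso by fastforce
      then show "m \<in> range G" by (metis rangeI)
    qed
  qed (use G in blast)
  ultimately show ?thesis
    by (simp add: N_def)
qed

lemma partial_isometry_complementary:
  fixes J :: "'x::{real_inner,complete_space} \<Rightarrow> 'h::real_inner"
    and F :: "'x \<Rightarrow> 'e::real_inner"
  assumes "bounded_linear J" "partial_isometry F"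
    and norm_split: "\<And>u. (norm u)\<^sup>2 = (norm (J u))\<^sup>2 + (norm (F u))\<^sup>2"
  shows "null_space J = (null_space F)\<^sup>\<bottom>" and "partial_isometry J"
proof -
  define N where "N = null_space F"
  have sub: "subspace N" and cl: "closed N"
    using assms(2) subspace_null_space closed_null_space bounded_linear.linear
    unfolding N_def partial_isometry_def by blast+
  have J_0: "J x = 0" if "x \<in> N\<^sup>\<bottom>" for x
    using that assms(2) norm_split[of x] by (simp add: partial_isometry_iff N_def)
  have J_iso: "norm (J x) = norm x" if "x \<in> N" for x
    using that norm_split[of x] by (simp add: N_def null_space_def)
  show NJ: "null_space J = (null_space F)\<^sup>\<bottom>"
  proof
    show "null_space J \<subseteq> (null_space F)\<^sup>\<bottom>"
    proof
      fix u assume "u \<in> null_space J"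
      obtain a where a: "a \<in> N" "u - a \<in> N\<^sup>\<bottom>"
        using orthogonal_decomposition[OF sub cl] by blast
      have "J a = J u - J (u - a)"
        by (simp add: linear_diff[OF bounded_linear.linear[OF assms(1)]])
      then have "J a = 0"
        using \<open>u \<in> null_space J\<close> J_0[OF \<open>u - a \<in> N\<^sup>\<bottom>\<close>] by (simp add: null_space_def)
      then have "a = 0"
        using J_iso[OF \<open>a \<in> N\<close>] by simp
      then show "u \<in> (null_space F)\<^sup>\<bottom>"
        using a by (simp add: N_def)
    qed
  qed (use J_0 in \<open>auto simp: N_def null_space_def\<close>)
  show "partial_isometry J"
    unfolding partial_isometry_iff NJ
    using assms(1) J_iso orthogonal_comp_orthogonal_comp_closed_subspace[OF sub cl]
    by (simp add: N_def)
qed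

theorem mainTheorem7:
  fixes J :: "'x::{real_inner,complete_space} \<Rightarrow> 'h::{real_inner,complete_space}"
    and F :: "'x \<Rightarrow> 'e::{real_inner,complete_space}"
    and D :: "'h set" and Y :: "'h \<Rightarrow> 'x"
  assumes "splitting_pullback_triple J F D Y"
  shows "partial_isometry J \<and> partial_isometry F \<and>
         null_space F = range (adjoint J) \<and> range J = UNIV \<and>
         null_space J = range (adjoint F) \<and> range F = UNIV"
proof -
  have J: "bounded_linear J" "closure (range J) = UNIV"
    and F: "partial_isometry F" "closure (range F) = UNIV"
    and norm_split: "\<And>u. (norm u)\<^sup>2 = (norm (J u))\<^sup>2 + (norm (F u))\<^sup>2"
    using assms unfolding splitting_pullback_triple_def pullback_triple_def by auto
  have NJ: "null_space J = (null_space F)\<^sup>\<bottom>" and piJ: "partial_isometry J"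
    using partial_isometry_complementary[OF J(1) F(1) norm_split] by blast+
  have NF: "null_space F = (null_space J)\<^sup>\<bottom>"
    using partial_isometry_complementary[OF _ piJ, of F] F(1) norm_split
    by (simp add: partial_isometry_def add.commute)
  have "range J = UNIV" "range F = UNIV"
    using surj_if_partial_isometry_dense_range piJ J(2) F by blast+
  with piJ F(1) NJ NF show ?thesis
    using range_adjoint_surj_partial_isometry by metis
qed

end
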